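(* Let $G$ be an $n$-dimensional Lie group with identity $e$ and Lie algebra $\mathfrak g=T_eG$, and let $\mathcal Y$ be a manifold (e.g. $\mathbb R^p$) with a smooth right action $(\rho_g)_{g\in G}$ of $G$ (so $\rho_{g_1}\circ\rho_{g_2}=\rho_{g_2g_1}$). Consider the system $\frac{d}{dt}x = DL_x\,\omega_s(t)$, $y=h(x)$, where $x\in G$, $t\mapsto\omega_s(t)\in\mathfrak g$ is a known input, and $h:G\to\mathcal Y$ is smooth and right equivariant: $h(xg)=\rho_g(h(x))$ for all $x,g\in G$. Fix a basis $W_1,\dots,W_n$ of $\mathfrak g$ and smooth scalar functions $\mathcal L_1,\dots,\mathcal L_n$ on $\mathcal Y$ with $\mathcal L_i(h(e))=0$, and consider the observer $$\frac{d}{dt}\hat x = DL_{\hat x}\,\omega_s(t) + DR_{\hat x}\Big(\sum_{i=1}^n\mathcal L_i\big(\rho_{\hat x^{-1}}(y)\big)W_i\Big).$$ Then the error $\eta=\hat x x^{-1}\in G$ satisfies the autonomous differential equation $$\frac{d}{dt}\eta = DR_\eta\Big(\sum_{i=1}^n\mathcal L_i\big(h(\eta^{-1})\big)W_i\Big),$$ which is independent of the trajectory $t\mapsto x(t)$ and of the input $\omega_s$.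
   Context: $L_g:x\mapsto gx$ and $R_g:x\mapsto xg$ are left and right multiplication on $G$; $DL_g$, $DR_g$ denote their differentials (maps between tangent spaces). *)

theory Defs
  imports "HOL-Analysis.Analysis"
begin

text \<open>Lie groups and manifolds are modelled as smooth embedded submanifolds of
Euclidean spaces (every manifold admits such an embedding, Whitney).\<close>

primrec dderiv :: "'a::real_normed_vector list \<Rightarrow> ('a \<Rightarrow> 'b::real_normed_vector) \<Rightarrow> 'a \<Rightarrow> 'b" where
  "dderiv [] f = f"
| "dderiv (v # vs) f = (\<lambda>x. frechet_derivative (dderiv vs f) (at x) v)"

definition smooth_on :: "'a::euclidean_space set \<Rightarrow> ('a \<Rightarrow> 'b::euclidean_space) \<Rightarrow> bool" where
  "smooth_on U f \<longleftrightarrow> open U \<and> (\<forall>vs. \<forall>x\<in>U. dderiv vs f differentiable (at x))"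

definition smooth_map :: "'a::euclidean_space set \<Rightarrow> ('a \<Rightarrow> 'b::euclidean_space) \<Rightarrow> bool" where
  "smooth_map M f \<longleftrightarrow> (\<forall>p\<in>M. \<exists>U F. open U \<and> p \<in> U \<and> smooth_on U F \<and> (\<forall>x\<in>U \<inter> M. F x = f x))"

definition submanifold :: "nat \<Rightarrow> 'a::euclidean_space set \<Rightarrow> bool" where
  "submanifold d M \<longleftrightarrow> (\<forall>p\<in>M. \<exists>(S::'a set) U (V::'a set) \<phi> \<psi>.
      subspace S \<and> dim S = d \<and> open U \<and> p \<in> U \<and> open V \<and> smooth_on V \<phi> \<and>
      homeomorphism (S \<inter> V) (M \<inter> U) \<phi> \<psi> \<and>
      (\<forall>x\<in>S \<inter> V. inj_on (frechet_derivative \<phi> (at x)) S))"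

definition is_manifold :: "'a::euclidean_space set \<Rightarrow> bool" where
  "is_manifold M \<longleftrightarrow> (\<exists>d. submanifold d M)"

definition curve_through :: "'a::euclidean_space set \<Rightarrow> 'a \<Rightarrow> 'a \<Rightarrow> (real \<Rightarrow> 'a) \<Rightarrow> bool" where
  "curve_through M p v \<gamma> \<longleftrightarrow> (\<exists>\<epsilon>>0. \<forall>s. \<bar>s\<bar> < \<epsilon> \<longrightarrow> \<gamma> s \<in> M) \<and> \<gamma> 0 = p \<and>
      (\<gamma> has_vector_derivative v) (at 0)"

definition tangent_space :: "'a::euclidean_space set \<Rightarrow> 'a \<Rightarrow> 'a set" where
  "tangent_space M p = {v. \<exists>\<gamma>. curve_through M p v \<gamma>}"

definition diff :: "'a::euclidean_space set \<Rightarrow> ('a \<Rightarrow> 'b::euclidean_space) \<Rightarrow> 'a \<Rightarrow> 'a \<Rightarrow> 'b" where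
  "diff M f p v = (THE w. \<forall>\<gamma>. curve_through M p v \<gamma> \<longrightarrow> ((f \<circ> \<gamma>) has_vector_derivative w) (at 0))"

definition lie_group :: "nat \<Rightarrow> 'a::euclidean_space set \<Rightarrow> ('a \<Rightarrow> 'a \<Rightarrow> 'a) \<Rightarrow> ('a \<Rightarrow> 'a) \<Rightarrow> 'a \<Rightarrow> bool" where
  "lie_group d G mul gi e \<longleftrightarrow>
     e \<in> G \<and> (\<forall>a\<in>G. \<forall>b\<in>G. mul a b \<in> G) \<and> (\<forall>a\<in>G. gi a \<in> G) \<and>
     (\<forall>a\<in>G. \<forall>b\<in>G. \<forall>c\<in>G. mul (mul a b) c = mul a (mul b c)) \<and>
     (\<forall>a\<in>G. mul e a = a \<and> mul a e = a) \<and>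
     (\<forall>a\<in>G. mul (gi a) a = e \<and> mul a (gi a) = e) \<and>
     submanifold d G \<and> smooth_map (G \<times> G) (\<lambda>(a, b). mul a b) \<and> smooth_map G gi"

definition smooth_right_action :: "'a::euclidean_space set \<Rightarrow> ('a \<Rightarrow> 'a \<Rightarrow> 'a) \<Rightarrow> 'a \<Rightarrow>
    'b::euclidean_space set \<Rightarrow> ('a \<Rightarrow> 'b \<Rightarrow> 'b) \<Rightarrow> bool" where
  "smooth_right_action G mul e Y \<rho> \<longleftrightarrow>
     (\<forall>g\<in>G. \<forall>y\<in>Y. \<rho> g y \<in> Y) \<and> (\<forall>y\<in>Y. \<rho> e y = y) \<and>
     (\<forall>g1\<in>G. \<forall>g2\<in>G. \<forall>y\<in>Y. \<rho> g1 (\<rho> g2 y) = \<rho> (mul g2 g1) y) \<and>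
     smooth_map (G \<times> Y) (\<lambda>(g, y). \<rho> g y)"

end

theory Submission
  imports Defs
begin

text \<open>Differentiate \<open>\<eta> = x\<^sub>h x\<^sup>-\<^sup>1\<close> by the chain rule for \<open>(a, b) \<mapsto> a b\<^sup>-\<^sup>1\<close> on \<open>G \<times> G\<close>.
The two left-invariant terms \<open>DL\<^sub>x\<^sub>h \<omega>\<close> and \<open>DL\<^sub>x \<omega>\<close> cancel: for a curve \<open>\<gamma>\<close> through \<open>e\<close> with
velocity \<open>\<omega>\<close>, the product \<open>(x\<^sub>h \<gamma>)(x \<gamma>)\<^sup>-\<^sup>1 = x\<^sub>h x\<^sup>-\<^sup>1\<close> is constant. The right-invariant
correction \<open>DR\<^sub>x\<^sub>h S\<close> is carried to \<open>DR\<^sub>\<eta> S\<close>, because \<open>(\<gamma> x\<^sub>h) x\<^sup>-\<^sup>1 = \<gamma> \<eta>\<close>. Finally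
equivariance gives \<open>\<rho>\<^bsub>x\<^sub>h\<^sup>-\<^sup>1\<^esub> (h x) = h (x x\<^sub>h\<^sup>-\<^sup>1) = h (\<eta>\<^sup>-\<^sup>1)\<close>, so \<open>S\<close> depends on \<open>\<eta>\<close> alone.\<close>

text \<open>Only its values on tangent vectors are determined.\<close>

definition has_relative_derivative ::
    "'a::real_normed_vector set \<Rightarrow> ('a \<Rightarrow> 'b::real_normed_vector) \<Rightarrow> 'a \<Rightarrow> ('a \<Rightarrow> 'b) \<Rightarrow> bool" where
  "has_relative_derivative M f p f' \<longleftrightarrow> linear f' \<and>
     (\<forall>c v s. c s = p \<longrightarrow> eventually (\<lambda>r. c r \<in> M) (nhds s) \<longrightarrow> (c has_vector_derivative v) (at s) \<longrightarrow>
        ((\<lambda>r. f (c r)) has_vector_derivative f' v) (at s))"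

lemma has_relative_derivativeD:
  assumes "has_relative_derivative M f p f'" "c s = p" "eventually (\<lambda>r. c r \<in> M) (nhds s)"
    "(c has_vector_derivative v) (at s)"
  shows "((\<lambda>r. f (c r)) has_vector_derivative f' v) (at s)"
  using assms unfolding has_relative_derivative_def by blast

lemma has_relative_derivative_PairD:
  assumes "has_relative_derivative (A \<times> B) f (a, b) f'" "c s = a" "d s = b"
    "eventually (\<lambda>r. c r \<in> A \<and> d r \<in> B) (nhds s)"
    "(c has_vector_derivative u) (at s)" "(d has_vector_derivative v) (at s)"
  shows "((\<lambda>r. f (c r, d r)) has_vector_derivative f' (u, v)) (at s)"
  using assms by (intro has_relative_derivativeD[of "A \<times> B" f "(a, b)" f'] has_vector_derivative_Pair) auto

lemma has_vector_derivative_eventually_eq: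
  assumes "eventually (\<lambda>s. f s = g s) (nhds t)" "(g has_vector_derivative v) (at t)"
  shows "(f has_vector_derivative v) (at t)"
  using has_vector_derivative_cong_ev[where x=t and S=UNIV and f=f and g=g] assms eventually_nhds_x_imp_x[OF assms(1)]
  by (auto elim: eventually_mono)

lemma has_vector_derivative_eventually_const:
  assumes "eventually (\<lambda>s. f s = k) (nhds t)" "(f has_vector_derivative v) (at t)"
  shows "v = 0"
  using has_vector_derivative_eventually_eq[OF assms(1) has_vector_derivative_const] assms(2)
    vector_derivative_unique_at by blast

lemma smooth_map_has_relative_derivative:
  assumes "smooth_map M f" "p \<in> M"
  obtains f' where "has_relative_derivative M f p f'"
proof -
  obtain U F where U: "open U" "p \<in> U" and smooth: "smooth_on U F" and F_eq: "\<forall>z\<in>U \<inter> M. F z = f z"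
    using assms unfolding smooth_map_def by blast
  have "F differentiable (at p)"
    using smooth U unfolding smooth_on_def by (metis dderiv.simps(1))
  then have F': "(F has_derivative frechet_derivative F (at p)) (at p)"
    using frechet_derivative_works by blast
  have "has_relative_derivative M f p (frechet_derivative F (at p))"
    unfolding has_relative_derivative_def
  proof (intro conjI allI impI)
    show "linear (frechet_derivative F (at p))" using F' has_derivative_linear by blast
    fix c v s assume c: "c s = p" "eventually (\<lambda>r. c r \<in> M) (nhds s)" "(c has_vector_derivative v) (at s)"
    have "isCont c s" using c(3) has_vector_derivative_continuous by blast
    then have "(c \<longlongrightarrow> p) (at s)" using c(1) by (simp add: isCont_def)
    then have "eventually (\<lambda>r. c r \<in> U) (at s)" using U by (rule topological_tendstoD)
    then have "eventually (\<lambda>r. c r \<in> U) (nhds s)"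
      using U(2) c(1) by (simp add: eventually_nhds_conv_at)
    then have "eventually (\<lambda>r. f (c r) = F (c r)) (nhds s)"
      using c(2) F_eq by (auto elim: eventually_mono[OF eventually_conj])
    moreover have "((\<lambda>r. F (c r)) has_vector_derivative frechet_derivative F (at p) v) (at s)"
      using vector_derivative_diff_chain_within[of c v s UNIV F] F' c(1,3)
      by (simp add: o_def has_derivative_at_withinI)
    ultimately show "((\<lambda>r. f (c r)) has_vector_derivative frechet_derivative F (at p) v) (at s)"
      by (rule has_vector_derivative_eventually_eq)
  qed
  then show thesis by (rule that)
qed

lemma has_relative_derivative_fix_fst:
  assumes "has_relative_derivative (A \<times> B) f (a, b) f'" "a \<in> A"
  shows "has_relative_derivative B (\<lambda>y. f (a, y)) b (\<lambda>v. f' (0, v))"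
  unfolding has_relative_derivative_def
proof (intro conjI allI impI)
  have lin: "linear f'" using assms(1) unfolding has_relative_derivative_def by blast
  show "linear (\<lambda>v. f' (0, v))"
    by (rule linearI) (simp_all add: linear_add[OF lin, symmetric] linear_scale[OF lin, symmetric])
  fix c v s assume "c s = b" "eventually (\<lambda>r. c r \<in> B) (nhds s)" "(c has_vector_derivative v) (at s)"
  then show "((\<lambda>r. f (a, c r)) has_vector_derivative f' (0, v)) (at s)"
    using has_relative_derivative_PairD[OF assms(1), of "\<lambda>_. a" s c 0 v] assms(2)
    by (auto elim: eventually_mono)
qed

lemma has_relative_derivative_fix_snd:
  assumes "has_relative_derivative (A \<times> B) f (a, b) f'" "b \<in> B"
  shows "has_relative_derivative A (\<lambda>x. f (x, b)) a (\<lambda>v. f' (v, 0))"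
  unfolding has_relative_derivative_def
proof (intro conjI allI impI)
  have lin: "linear f'" using assms(1) unfolding has_relative_derivative_def by blast
  show "linear (\<lambda>v. f' (v, 0))"
    by (rule linearI) (simp_all add: linear_add[OF lin, symmetric] linear_scale[OF lin, symmetric])
  fix c v s assume "c s = a" "eventually (\<lambda>r. c r \<in> A) (nhds s)" "(c has_vector_derivative v) (at s)"
  then show "((\<lambda>r. f (c r, b)) has_vector_derivative f' (v, 0)) (at s)"
    using has_relative_derivative_PairD[OF assms(1), of c s "\<lambda>_. b" v 0] assms(2)
    by (auto elim: eventually_mono)
qed

lemma curve_through_eventually_in:
  assumes "curve_through M p v \<gamma>"
  shows "eventually (\<lambda>s. \<gamma> s \<in> M) (nhds 0)"
proof -
  from assms obtain \<epsilon> where "\<epsilon> > 0" "\<forall>s. \<bar>s\<bar> < \<epsilon> \<longrightarrow> \<gamma> s \<in> M"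
    unfolding curve_through_def by blast
  then show ?thesis
    unfolding eventually_nhds_metric by (auto simp: dist_real_def)
qed

lemma diff_eq_relative_derivative:
  assumes f': "has_relative_derivative M f p f'" and v: "v \<in> tangent_space M p"
  shows "diff M f p v = f' v"
proof -
  have along: "((f \<circ> c) has_vector_derivative f' v) (at 0)" if "curve_through M p v c" for c
    using has_relative_derivativeD[OF f'] curve_through_eventually_in[OF that] that
    unfolding curve_through_def o_def by blast
  obtain \<gamma> where \<gamma>: "curve_through M p v \<gamma>" using v unfolding tangent_space_def by blast
  show ?thesis
    unfolding diff_def
  proof (rule the_equality)
    show "\<forall>c. curve_through M p v c \<longrightarrow> ((f \<circ> c) has_vector_derivative f' v) (at 0)"
      using along by blast
    fix w assume "\<forall>c. curve_through M p v c \<longrightarrow> ((f \<circ> c) has_vector_derivative w) (at 0)"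
    then show "w = f' v" using along[OF \<gamma>] \<gamma> vector_derivative_unique_at by blast
  qed
qed

lemma has_vector_derivative_diff:
  assumes f': "has_relative_derivative M f p f'" and \<gamma>: "curve_through M p v \<gamma>"
  shows "((\<lambda>s. f (\<gamma> s)) has_vector_derivative diff M f p v) (at 0)"
proof -
  have "v \<in> tangent_space M p" using \<gamma> unfolding tangent_space_def by blast
  then show ?thesis
    using diff_eq_relative_derivative[OF f'] has_relative_derivativeD[OF f'] curve_through_eventually_in[OF \<gamma>] \<gamma>
    unfolding curve_through_def by simp
qed

lemma lie_groupD:
  assumes "lie_group d G mul gi e"
  shows "e \<in> G" and "\<And>a b. a \<in> G \<Longrightarrow> b \<in> G \<Longrightarrow> mul a b \<in> G" and "\<And>a. a \<in> G \<Longrightarrow> gi a \<in> G"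
    and "\<And>a b c. a \<in> G \<Longrightarrow> b \<in> G \<Longrightarrow> c \<in> G \<Longrightarrow> mul (mul a b) c = mul a (mul b c)"
    and "\<And>a. a \<in> G \<Longrightarrow> mul e a = a" and "\<And>a. a \<in> G \<Longrightarrow> mul a e = a"
    and "\<And>a. a \<in> G \<Longrightarrow> mul (gi a) a = e" and "\<And>a. a \<in> G \<Longrightarrow> mul a (gi a) = e"
    and "smooth_map (G \<times> G) (\<lambda>(a, b). mul a b)" and "smooth_map G gi"
  using assms unfolding lie_group_def by auto

lemma lie_group_inv_eqI:
  assumes G: "lie_group d G mul gi e" and a: "a \<in> G" and b: "b \<in> G" and ab: "mul a b = e"
  shows "gi a = b"
proof -
  note group = lie_groupD[OF G]
  have "gi a = mul (gi a) (mul a b)" using group a ab by simp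
  also have "\<dots> = mul (mul (gi a) a) b" using group(3,4) a b by simp
  also have "\<dots> = b" by (simp only: group(7)[OF a] group(5)[OF b])
  finally show ?thesis .
qed

lemma lie_group_inv_mul:
  assumes G: "lie_group d G mul gi e" and a: "a \<in> G" and b: "b \<in> G"
  shows "gi (mul a b) = mul (gi b) (gi a)"
proof (rule lie_group_inv_eqI[OF G])
  note group = lie_groupD[OF G]
  have ga: "gi a \<in> G" and gb: "gi b \<in> G" using group a b by auto
  have "mul (mul a b) (mul (gi b) (gi a)) = mul a (mul (mul b (gi b)) (gi a))"
    by (simp only: group(4)[OF a b group(2)[OF gb ga]] group(4)[OF b gb ga])
  also have "\<dots> = e" using group a b ga by simp
  finally show "mul (mul a b) (mul (gi b) (gi a)) = e" .
qed (use lie_groupD[OF G] a b in auto)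

lemma lie_group_inv_inv:
  assumes G: "lie_group d G mul gi e" and a: "a \<in> G"
  shows "gi (gi a) = a"
  using lie_group_inv_eqI[OF G] lie_groupD[OF G] a by simp

lemma lie_group_inv_mul_inv:
  assumes G: "lie_group d G mul gi e" and a: "a \<in> G" and b: "b \<in> G"
  shows "gi (mul a (gi b)) = mul b (gi a)"
  using lie_group_inv_mul[OF G] lie_group_inv_inv[OF G] lie_groupD[OF G] a b by simp

lemma lie_group_mul_inv_right_translate:
  assumes G: "lie_group d G mul gi e" and a: "a \<in> G" and b: "b \<in> G" and g: "g \<in> G"
  shows "mul (mul a g) (gi (mul b g)) = mul a (gi b)"
proof -
  note group = lie_groupD[OF G]
  have gb: "gi b \<in> G" and gg: "gi g \<in> G" using group b g by auto
  have "mul (mul a g) (gi (mul b g)) = mul (mul a g) (mul (gi g) (gi b))"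
    using lie_group_inv_mul[OF G b g] by simp
  also have "\<dots> = mul a (mul (mul g (gi g)) (gi b))"
    by (simp only: group(4)[OF a g group(2)[OF gg gb]] group(4)[OF g gg gb])
  also have "\<dots> = mul a (gi b)" using group a g gb by simp
  finally show ?thesis .
qed

lemma lie_group_mul_has_relative_derivative:
  assumes G: "lie_group d G mul gi e" and "a \<in> G" "b \<in> G"
  obtains m' where "has_relative_derivative (G \<times> G) (\<lambda>(x, y). mul x y) (a, b) m'"
  using smooth_map_has_relative_derivative[OF lie_groupD(9)[OF G], of "(a, b)"] assms by auto

lemma lie_group_left_translate_curve:
  assumes G: "lie_group d G mul gi e" and a: "a \<in> G" and \<gamma>: "curve_through G e v \<gamma>"
  shows "((\<lambda>s. mul a (\<gamma> s)) has_vector_derivative diff G (mul a) e v) (at 0)"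
proof -
  obtain m' where "has_relative_derivative (G \<times> G) (\<lambda>(x, y). mul x y) (a, e) m'"
    using lie_group_mul_has_relative_derivative[OF G a lie_groupD(1)[OF G]] .
  from has_relative_derivative_fix_fst[OF this a]
  have "has_relative_derivative G (mul a) e (\<lambda>v. m' (0, v))" by simp
  then show ?thesis using has_vector_derivative_diff \<gamma> by blast
qed

lemma lie_group_right_translate_curve:
  assumes G: "lie_group d G mul gi e" and a: "a \<in> G" and \<gamma>: "curve_through G e v \<gamma>"
  shows "((\<lambda>s. mul (\<gamma> s) a) has_vector_derivative diff G (\<lambda>z. mul z a) e v) (at 0)"
proof -
  obtain m' where "has_relative_derivative (G \<times> G) (\<lambda>(x, y). mul x y) (e, a) m'"
    using lie_group_mul_has_relative_derivative[OF G lie_groupD(1)[OF G] a] .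
  from has_relative_derivative_fix_snd[OF this a]
  have "has_relative_derivative G (\<lambda>z. mul z a) e (\<lambda>v. m' (v, 0))" by simp
  then show ?thesis using has_vector_derivative_diff[of G "\<lambda>z. mul z a"] \<gamma> by blast
qed

lemma mul_inv_derivative_left_invariant_eq_0:
  assumes G: "lie_group d G mul gi e" and a: "a \<in> G" and b: "b \<in> G"
    and m': "has_relative_derivative (G \<times> G) (\<lambda>(x, y). mul x y) (a, gi b) m'"
    and i': "has_relative_derivative G gi b i'"
    and w: "w \<in> tangent_space G e"
  shows "m' (diff G (mul a) e w, i' (diff G (mul b) e w)) = 0"
proof -
  note group = lie_groupD[OF G]
  obtain \<gamma> where \<gamma>: "curve_through G e w \<gamma>" using w unfolding tangent_space_def by blast
  have \<gamma>_in: "eventually (\<lambda>s. \<gamma> s \<in> G) (nhds 0)" and \<gamma>0: "\<gamma> 0 = e"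
    using curve_through_eventually_in[OF \<gamma>] \<gamma> unfolding curve_through_def by auto
  have "mul b (\<gamma> 0) = b" "eventually (\<lambda>s. mul b (\<gamma> s) \<in> G) (nhds 0)"
    using \<gamma>_in \<gamma>0 group b by (auto elim: eventually_mono)
  then have "((\<lambda>s. gi (mul b (\<gamma> s))) has_vector_derivative i' (diff G (mul b) e w)) (at 0)"
    by (rule has_relative_derivativeD[OF i' _ _ lie_group_left_translate_curve[OF G b \<gamma>]])
  moreover have "eventually (\<lambda>s. mul a (\<gamma> s) \<in> G \<and> gi (mul b (\<gamma> s)) \<in> G) (nhds 0)"
    using \<gamma>_in group a b by (auto elim: eventually_mono)
  ultimately have "((\<lambda>s. mul (mul a (\<gamma> s)) (gi (mul b (\<gamma> s)))) has_vector_derivative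
      m' (diff G (mul a) e w, i' (diff G (mul b) e w))) (at 0)"
    using has_relative_derivative_PairD[OF m' _ _ _ lie_group_left_translate_curve[OF G a \<gamma>]] \<gamma>0 group a b
    by simp
  moreover have "eventually (\<lambda>s. mul (mul a (\<gamma> s)) (gi (mul b (\<gamma> s))) = mul a (gi b)) (nhds 0)"
    using \<gamma>_in lie_group_mul_inv_right_translate[OF G a b] by (auto elim: eventually_mono)
  ultimately show ?thesis by (rule has_vector_derivative_eventually_const[rotated])
qed

lemma mul_derivative_right_translate:
  assumes G: "lie_group d G mul gi e" and a: "a \<in> G" and c: "c \<in> G"
    and m': "has_relative_derivative (G \<times> G) (\<lambda>(x, y). mul x y) (a, c) m'"
    and S: "S \<in> tangent_space G e"
  shows "m' (diff G (\<lambda>z. mul z a) e S, 0) = diff G (\<lambda>z. mul z (mul a c)) e S"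
proof -
  note group = lie_groupD[OF G]
  obtain \<gamma> where \<gamma>: "curve_through G e S \<gamma>" using S unfolding tangent_space_def by blast
  have ac: "mul a c \<in> G" using group a c by blast
  have \<gamma>_in: "eventually (\<lambda>s. \<gamma> s \<in> G) (nhds 0)" and \<gamma>0: "\<gamma> 0 = e"
    using curve_through_eventually_in[OF \<gamma>] \<gamma> unfolding curve_through_def by auto
  have "eventually (\<lambda>s. mul (\<gamma> s) a \<in> G \<and> c \<in> G) (nhds 0)"
    using \<gamma>_in group a c by (auto elim: eventually_mono)
  then have "((\<lambda>s. mul (mul (\<gamma> s) a) c) has_vector_derivative m' (diff G (\<lambda>z. mul z a) e S, 0)) (at 0)"
    using has_relative_derivative_PairD[OF m' _ _ _ lie_group_right_translate_curve[OF G a \<gamma>]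
        has_vector_derivative_const] \<gamma>0 group a
    by simp
  moreover have "eventually (\<lambda>s. mul (mul (\<gamma> s) a) c = mul (\<gamma> s) (mul a c)) (nhds 0)"
    using \<gamma>_in group a c by (auto elim: eventually_mono)
  then have "((\<lambda>s. mul (mul (\<gamma> s) a) c) has_vector_derivative diff G (\<lambda>z. mul z (mul a c)) e S) (at 0)"
    by (rule has_vector_derivative_eventually_eq[OF _ lie_group_right_translate_curve[OF G ac \<gamma>]])
  ultimately show ?thesis using vector_derivative_unique_at by blast
qed

lemma mul_inv_has_vector_derivative:
  assumes G: "lie_group d G mul gi e"
    and x_in: "eventually (\<lambda>s. x s \<in> G) (nhds t)" and xh_in: "eventually (\<lambda>s. xh s \<in> G) (nhds t)"
    and x': "(x has_vector_derivative diff G (mul (x t)) e w) (at t)"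
    and xh': "(xh has_vector_derivative diff G (mul (xh t)) e w + diff G (\<lambda>z. mul z (xh t)) e S) (at t)"
    and w: "w \<in> tangent_space G e" and S: "S \<in> tangent_space G e"
  shows "((\<lambda>s. mul (xh s) (gi (x s))) has_vector_derivative
           diff G (\<lambda>z. mul z (mul (xh t) (gi (x t)))) e S) (at t)"
proof -
  note group = lie_groupD[OF G]
  define a b where "a = xh t" and "b = x t"
  have a: "a \<in> G" and b: "b \<in> G"
    using eventually_nhds_x_imp_x[OF x_in] eventually_nhds_x_imp_x[OF xh_in] a_def b_def by auto
  obtain m' where m': "has_relative_derivative (G \<times> G) (\<lambda>(x, y). mul x y) (a, gi b) m'"
    using lie_group_mul_has_relative_derivative[OF G a] group b by blast
  obtain i' where i': "has_relative_derivative G gi b i'"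
    using smooth_map_has_relative_derivative group b by blast
  have "((\<lambda>s. gi (x s)) has_vector_derivative i' (diff G (mul b) e w)) (at t)"
    using has_relative_derivativeD[OF i' _ x_in x'] b_def by simp
  moreover have "eventually (\<lambda>s. xh s \<in> G \<and> gi (x s) \<in> G) (nhds t)"
    using x_in xh_in group by (auto elim: eventually_mono[OF eventually_conj])
  ultimately have \<eta>': "((\<lambda>s. mul (xh s) (gi (x s))) has_vector_derivative
      m' (diff G (mul a) e w + diff G (\<lambda>z. mul z a) e S, i' (diff G (mul b) e w))) (at t)"
    using has_relative_derivative_PairD[OF m' _ _ _ xh'[folded a_def]] a_def b_def by simp
  have "linear m'" using m' unfolding has_relative_derivative_def by blast
  then have "m' (diff G (mul a) e w + diff G (\<lambda>z. mul z a) e S, i' (diff G (mul b) e w))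
      = m' (diff G (mul a) e w, i' (diff G (mul b) e w)) + m' (diff G (\<lambda>z. mul z a) e S, 0)"
    by (simp add: linear_add[symmetric])
  also have "\<dots> = diff G (\<lambda>z. mul z (mul a (gi b))) e S"
    using mul_inv_derivative_left_invariant_eq_0[OF G a b m' i' w]
      mul_derivative_right_translate[OF G a _ m' S] group b by simp
  finally show ?thesis using \<eta>' a_def b_def by simp
qed

theorem mainTheorem2:
  fixes G :: "'a::euclidean_space set" and mul :: "'a \<Rightarrow> 'a \<Rightarrow> 'a"
    and gi :: "'a \<Rightarrow> 'a" and e :: 'a
    and Y :: "'b::euclidean_space set" and \<rho> :: "'a \<Rightarrow> 'b \<Rightarrow> 'b"
    and h :: "'a \<Rightarrow> 'b"
    and W :: "'n::finite \<Rightarrow> 'a" and L :: "'n \<Rightarrow> 'b \<Rightarrow> real"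
    and \<omega> :: "real \<Rightarrow> 'a" and x xh :: "real \<Rightarrow> 'a" and I :: "real set"
  defines "DL \<equiv> \<lambda>g v. diff G (mul g) e v"
    and "DR \<equiv> \<lambda>g v. diff G (\<lambda>z. mul z g) e v"
  assumes LG: "lie_group CARD('n) G mul gi e"
    and Ym: "is_manifold Y"
    and act: "smooth_right_action G mul e Y \<rho>"
    and h_smooth: "smooth_map G h" and h_into: "\<forall>a\<in>G. h a \<in> Y"
    and h_equiv: "\<forall>a\<in>G. \<forall>g\<in>G. h (mul a g) = \<rho> g (h a)"
    and W_basis: "inj W" "independent (range W)" "span (range W) = tangent_space G e"
    and L_smooth: "\<forall>i. smooth_map Y (L i)"
    and L_zero: "\<forall>i. L i (h e) = 0"
    and I_open: "open I"
    and \<omega>_in: "\<forall>t\<in>I. \<omega> t \<in> tangent_space G e"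
    and x_in: "\<forall>t\<in>I. x t \<in> G"
    and x_ode: "\<forall>t\<in>I. (x has_vector_derivative DL (x t) (\<omega> t)) (at t)"
    and xh_in: "\<forall>t\<in>I. xh t \<in> G"
    and xh_ode: "\<forall>t\<in>I. (xh has_vector_derivative
          (DL (xh t) (\<omega> t) + DR (xh t) (\<Sum>i\<in>UNIV. L i (\<rho> (gi (xh t)) (h (x t))) *\<^sub>R W i))) (at t)"
  shows "\<forall>t\<in>I. ((\<lambda>s. mul (xh s) (gi (x s))) has_vector_derivative
          DR (mul (xh t) (gi (x t)))
             (\<Sum>i\<in>UNIV. L i (h (gi (mul (xh t) (gi (x t))))) *\<^sub>R W i)) (at t)"
proof
  fix t assume t: "t \<in> I"
  define S where "S = (\<Sum>i\<in>UNIV. L i (h (gi (mul (xh t) (gi (x t))))) *\<^sub>R W i)"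
  have near_t: "eventually (\<lambda>s. s \<in> I) (nhds t)"
    using I_open t eventually_nhds_in_open by blast
  have "gi (xh t) \<in> G" using lie_groupD(3)[OF LG] xh_in t by blast
  then have "h (gi (mul (xh t) (gi (x t)))) = \<rho> (gi (xh t)) (h (x t))"
    using lie_group_inv_mul_inv[OF LG] h_equiv x_in xh_in t by simp
  then have "(xh has_vector_derivative DL (xh t) (\<omega> t) + DR (xh t) S) (at t)"
    using xh_ode t unfolding S_def by simp
  moreover have "S \<in> tangent_space G e"
    unfolding S_def W_basis(3)[symmetric] by (intro span_sum span_scale span_base) auto
  moreover have "eventually (\<lambda>s. x s \<in> G) (nhds t)" "eventually (\<lambda>s. xh s \<in> G) (nhds t)"
    using near_t x_in xh_in by (auto elim: eventually_mono)
  ultimately show "((\<lambda>s. mul (xh s) (gi (x s))) has_vector_derivative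
      DR (mul (xh t) (gi (x t))) S) (at t)"
    using mul_inv_has_vector_derivative[OF LG _ _ _ _ \<omega>_in[rule_format, OF t]] x_ode t
    unfolding DL_def DR_def by blast
qed

end
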